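(* Under the standing assumptions below, for every nonempty bounded open interval $J\subset\mathbb R$, $$\lambda(J)\ge\frac{\pi^2}{\big(⨍_J \tfrac1p\big)\Big(⨍_J w+\pi^2⨍_J\Big|w-\frac{⨍_J w}{⨍_J 1/p}\,\frac1p\Big|\Big)\mathcal L(J)^2},$$ where $⨍_J g=\frac{1}{\mathcal L(J)}\int_J g\,dx$.
   Context: Standing assumptions: $1<\beta<\infty$; $q\in L^\infty(\mathbb R)$ with $0\le q\le\beta$ a.e.; $p,w\in L^\infty(\mathbb R)$ with $1/\beta\le p\le\beta$ and $1/\beta\le w\le\beta$ a.e. For a nonempty bounded open interval $J$, $\lambda(J)=\min_{u\in H^1_0(J),u\ne0}\frac{\int_J p u'^2\,dx+\int_J q u^2\,dx}{\int_J w u^2\,dx}$. $\mathcal L$ denotes Lebesgue measure. *)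

theory Defs
  imports "HOL-Analysis.Analysis"
begin

text \<open>One-dimensional H^1_0((a,b)): u is (on [a,b]) the primitive of a function
  g in L^2(a,b) (g is then the weak derivative u'), vanishing at a and b.\<close>
definition H10 :: "real \<Rightarrow> real \<Rightarrow> (real \<Rightarrow> real) \<Rightarrow> (real \<Rightarrow> real) \<Rightarrow> bool" where
  "H10 a b u g \<longleftrightarrow>
     g \<in> borel_measurable lebesgue \<and>
     set_integrable lebesgue {a<..<b} g \<and>
     set_integrable lebesgue {a<..<b} (\<lambda>x. (g x)\<^sup>2) \<and>
     (\<forall>x\<in>{a..b}. u x = (LINT t:{a<..<x}|lebesgue. g t)) \<and>
     u b = 0"

definition rayleigh :: "real \<Rightarrow> real \<Rightarrow> (real \<Rightarrow> real) \<Rightarrow> (real \<Rightarrow> real) \<Rightarrow> (real \<Rightarrow> real)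
    \<Rightarrow> (real \<Rightarrow> real) \<Rightarrow> (real \<Rightarrow> real) \<Rightarrow> real" where
  "rayleigh a b p q w u g =
     ((LINT x:{a<..<b}|lebesgue. p x * (g x)\<^sup>2) + (LINT x:{a<..<b}|lebesgue. q x * (u x)\<^sup>2))
     / (LINT x:{a<..<b}|lebesgue. w x * (u x)\<^sup>2)"

definition lambdaJ :: "real \<Rightarrow> real \<Rightarrow> (real \<Rightarrow> real) \<Rightarrow> (real \<Rightarrow> real) \<Rightarrow> (real \<Rightarrow> real) \<Rightarrow> real" where
  "lambdaJ a b p q w =
     Inf {rayleigh a b p q w u g | u g. H10 a b u g \<and> (\<exists>x\<in>{a<..<b}. u x \<noteq> 0)}"

definition avg :: "real \<Rightarrow> real \<Rightarrow> (real \<Rightarrow> real) \<Rightarrow> real" where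
  "avg a b f = (LINT x:{a<..<b}|lebesgue. f x) / (b - a)"

end

theory Submission
  imports Defs
begin

text \<open>The substitution \<open>s(x) = \<integral>\<^sub>a\<^sup>x 1/p\<close> maps \<open>J = (a, b)\<close> onto \<open>(0, S)\<close>,
  \<open>S = \<integral>\<^sub>J 1/p\<close>, and pushes \<open>dx / p\<close> forward to Lebesgue measure. For \<open>u \<in> H\<^sup>1\<^sub>0(J)\<close>
  with energy \<open>E = \<integral>\<^sub>J p u'\<^sup>2\<close>, Cauchy-Schwarz gives \<open>u(x)\<^sup>2 \<le> S E\<close>, and a Riccati argument
  with the comparison function \<open>k cot(d + k s(x))\<close>, \<open>k < \<pi>/S\<close>, gives the weighted Wirtinger
  inequality \<open>(\<pi>/S)\<^sup>2 \<integral>\<^sub>J u\<^sup>2/p \<le> E\<close>. Splitting \<open>w = c/p + (w - c/p)\<close> with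
  \<open>c = \<integral>\<^sub>J w / S\<close> and applying the first bound to \<open>c/p\<close> and the second to \<open>w - c/p\<close> yields
  \<open>\<integral>\<^sub>J w u\<^sup>2 \<le> E S (\<integral>\<^sub>J w + \<pi>\<^sup>2 \<integral>\<^sub>J |w - c/p|) / \<pi>\<^sup>2\<close>, which is the claim written with
  averages. The coefficients and \<open>u'\<close> are first replaced by Borel representatives satisfying
  the bounds everywhere.\<close>

section \<open>Integrals over bounded intervals\<close>

lemma set_integrable_Ioo_const:
  fixes l r c :: real
  shows "set_integrable lborel {l<..<r} (\<lambda>_. c)"
proof -
  have "emeasure lborel {l<..<r} < \<infinity>"
  proof (cases "l \<le> r")
    case False
    then have "{l<..<r} = {}" by auto
    then show ?thesis by simp
  qed simp
  then show ?thesis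
    unfolding set_integrable_def by simp
qed

lemma set_integrable_Ioo_bounded:
  fixes f :: "real \<Rightarrow> real"
  assumes [measurable]: "f \<in> borel_measurable borel" and bound: "\<And>x. x \<in> {l<..<r} \<Longrightarrow> \<bar>f x\<bar> \<le> C"
  shows "set_integrable lborel {l<..<r} f"
  by (rule set_integrable_bound[OF set_integrable_Ioo_const[of l r C]])
     (use bound in \<open>auto simp: set_borel_measurable_def intro!: order_trans[OF _ abs_ge_self]\<close>)

lemma set_integrable_mult_bounded:
  fixes \<phi> f :: "real \<Rightarrow> real"
  assumes [measurable]: "A \<in> sets borel" "\<phi> \<in> borel_measurable borel" "f \<in> borel_measurable borel"
    and \<phi>: "set_integrable lborel A \<phi>" and bound: "\<And>x. x \<in> A \<Longrightarrow> \<bar>f x\<bar> \<le> C"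
  shows "set_integrable lborel A (\<lambda>x. \<phi> x * f x)"
proof (rule set_integrable_bound[OF set_integrable_mult_left[OF \<phi>, of C]])
  show "set_borel_measurable lborel A (\<lambda>x. \<phi> x * f x)"
    unfolding set_borel_measurable_def by measurable
  show "AE x in lborel. x \<in> A \<longrightarrow> norm (\<phi> x * f x) \<le> norm (\<phi> x * C)"
  proof (intro AE_I2 impI)
    fix x assume "x \<in> A"
    with bound have "\<bar>f x\<bar> \<le> C" "0 \<le> C" by (auto intro: order_trans[OF abs_ge_zero])
    then show "norm (\<phi> x * f x) \<le> norm (\<phi> x * C)"
      by (simp add: abs_mult mult_left_mono)
  qed
qed

lemma set_integral_nonneg:
  fixes f :: "'a \<Rightarrow> real"
  assumes "\<And>x. x \<in> A \<Longrightarrow> 0 \<le> f x"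
  shows "0 \<le> (LINT x:A|M. f x)"
  unfolding set_lebesgue_integral_def using assms
  by (intro Bochner_Integration.integral_nonneg) (auto split: split_indicator)

lemma set_integral_Ioo_split:
  fixes f :: "real \<Rightarrow> real"
  assumes [measurable]: "f \<in> borel_measurable borel"
    and f: "set_integrable lborel {a<..<c} f" and "a \<le> b" "b \<le> c"
  shows "(LINT x:{a<..<c}|lborel. f x) = (LINT x:{a<..<b}|lborel. f x) + (LINT x:{b<..<c}|lborel. f x)"
proof -
  have "set_integrable lborel {a<..<b} f" "set_integrable lborel {b<..<c} f"
    by (rule set_integrable_subset[OF f]; use assms in auto)+
  moreover have "(LINT x:{a<..<c}|lborel. f x) = (\<integral>x. indicator {a<..<b} x * f x + indicator {b<..<c} x * f x \<partial>lborel)"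
    unfolding set_lebesgue_integral_def
    by (intro integral_cong_AE)
       (use assms in \<open>auto intro!: eventually_mono[OF AE_lborel_singleton[of b]] split: split_indicator\<close>)
  ultimately show ?thesis
    unfolding set_lebesgue_integral_def set_integrable_def by simp
qed

lemma set_integral_Ioo_mono_set:
  fixes f :: "real \<Rightarrow> real"
  assumes f: "set_integrable lborel {a<..<b} f" and "x \<le> b" and nonneg: "\<And>x. x \<in> {a<..<b} \<Longrightarrow> 0 \<le> f x"
  shows "(LINT t:{a<..<x}|lborel. f t) \<le> (LINT t:{a<..<b}|lborel. f t)"
proof -
  have "set_integrable lborel {a<..<x} f" by (rule set_integrable_subset[OF f]) (use assms in auto)
  with f show ?thesis
    using assms(2) nonneg unfolding set_lebesgue_integral_def set_integrable_def
    by (intro integral_mono) (auto split: split_indicator)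
qed

lemma borel_measurable_indefinite_integral:
  fixes \<psi> :: "real \<Rightarrow> real"
  assumes [measurable]: "\<psi> \<in> borel_measurable borel"
  shows "(\<lambda>x. LINT t:{a<..<x}|lborel. \<psi> t) \<in> borel_measurable borel"
proof -
  have "(\<lambda>x. LINT t:{a<..<x}|lborel. \<psi> t) = (\<lambda>x. \<integral>t. (if a < t \<and> t < x then \<psi> t else 0) \<partial>lborel)"
    by (auto simp: set_lebesgue_integral_def split: split_indicator intro!: Bochner_Integration.integral_cong)
  also have "\<dots> \<in> borel_measurable borel"
    by (rule lborel.borel_measurable_lebesgue_integral) measurable
  finally show ?thesis .
qed

lemma abs_indefinite_integral_le:
  fixes \<psi> :: "real \<Rightarrow> real"
  assumes \<psi>: "set_integrable lborel {a<..<b} \<psi>" and "x \<le> b"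
  shows "\<bar>LINT t:{a<..<x}|lborel. \<psi> t\<bar> \<le> (LINT t:{a<..<b}|lborel. \<bar>\<psi> t\<bar>)"
proof -
  have \<psi>x: "set_integrable lborel {a<..<x} \<psi>"
    by (rule set_integrable_subset[OF \<psi>]) (use assms in auto)
  have "\<bar>LINT t:{a<..<x}|lborel. \<psi> t\<bar> \<le> (LINT t:{a<..<x}|lborel. \<bar>\<psi> t\<bar>)"
    using set_integral_norm_bound[OF \<psi>x] by simp
  also have "\<dots> \<le> (LINT t:{a<..<b}|lborel. \<bar>\<psi> t\<bar>)"
    by (rule set_integral_Ioo_mono_set[OF set_integrable_abs[OF \<psi>] \<open>x \<le> b\<close>]) simp
  finally show ?thesis .
qed

lemma integrable_lborel_pair_mult:
  fixes F G :: "real \<Rightarrow> real"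
  assumes [measurable]: "F \<in> borel_measurable borel" "G \<in> borel_measurable borel"
    and F: "integrable lborel F" and G: "integrable lborel G"
  shows "integrable (lborel \<Otimes>\<^sub>M lborel) (\<lambda>(x, y). F x * G y)"
proof (rule lborel_pair.Fubini_integrable)
  show "(\<lambda>(x, y). F x * G y) \<in> borel_measurable (lborel \<Otimes>\<^sub>M lborel)" by measurable
  have "integrable lborel (\<lambda>x. \<bar>F x\<bar> * (\<integral>y. \<bar>G y\<bar> \<partial>lborel))"
    using F by (intro integrable_mult_left) auto
  then show "integrable lborel (\<lambda>x. \<integral>y. norm ((\<lambda>(x, y). F x * G y) (x, y)) \<partial>lborel)"
    by (simp add: abs_mult)
  show "AE x in lborel. integrable lborel (\<lambda>y. (\<lambda>(x, y). F x * G y) (x, y))"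
    using G by auto
qed

lemma integral_mult_split_diagonal:
  fixes F G :: "real \<Rightarrow> real"
  assumes [measurable]: "F \<in> borel_measurable borel" "G \<in> borel_measurable borel"
    and F: "integrable lborel F" and G: "integrable lborel G"
  shows "(\<integral>x. F x * (\<integral>y. G y * indicator {..<x} y \<partial>lborel) \<partial>lborel)
        + (\<integral>y. G y * (\<integral>x. F x * indicator {..y} x \<partial>lborel) \<partial>lborel)
        = (\<integral>x. F x \<partial>lborel) * (\<integral>y. G y \<partial>lborel)"
proof -
  let ?M = "lborel \<Otimes>\<^sub>M (lborel :: real measure)"
  have FG: "integrable ?M (\<lambda>(x, y). F x * G y)"
    by (rule integrable_lborel_pair_mult[OF _ _ F G]) simp_all
  have "{z \<in> space ?M. snd z < fst z} \<in> sets ?M" "{z \<in> space ?M. fst z \<le> snd z} \<in> sets ?M"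
    by measurable
  then have below: "{(x::real, y). y < x} \<in> sets ?M" and above: "{(x::real, y). x \<le> y} \<in> sets ?M"
    by (simp_all add: space_pair_measure case_prod_beta')
  have "(\<lambda>z. indicator {(x, y). y < x} z *\<^sub>R (\<lambda>(x, y). F x * G y) z)
      = (\<lambda>(x, y). F x * (G y * indicator {..<x} y))"
    "(\<lambda>z. indicator {(x, y). x \<le> y} z *\<^sub>R (\<lambda>(x, y). F x * G y) z)
      = (\<lambda>(x, y). G y * (F x * indicator {..y} x))"
    by (auto split: split_indicator)
  then have lower: "integrable ?M (\<lambda>(x, y). F x * (G y * indicator {..<x} y))"
    and upper: "integrable ?M (\<lambda>(x, y). G y * (F x * indicator {..y} x))"
    using integrable_mult_indicator[OF below FG] integrable_mult_indicator[OF above FG] by simp_all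
  have "(\<integral>x. F x \<partial>lborel) * (\<integral>y. G y \<partial>lborel) = (\<integral>x. (\<integral>y. F x * G y \<partial>lborel) \<partial>lborel)"
    by simp
  also have "\<dots> = integral\<^sup>L ?M (\<lambda>(x, y). F x * G y)"
    using lborel_pair.integral_fst[OF FG] by simp
  also have "\<dots> = integral\<^sup>L ?M (\<lambda>(x, y). F x * (G y * indicator {..<x} y))
      + integral\<^sup>L ?M (\<lambda>(x, y). G y * (F x * indicator {..y} x))"
    by (subst Bochner_Integration.integral_add[OF lower upper, symmetric])
       (auto intro!: Bochner_Integration.integral_cong split: split_indicator simp: algebra_simps)
  also have "integral\<^sup>L ?M (\<lambda>(x, y). F x * (G y * indicator {..<x} y))
      = (\<integral>x. F x * (\<integral>y. G y * indicator {..<x} y \<partial>lborel) \<partial>lborel)"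
    using lborel_pair.integral_fst[OF lower] by simp
  also have "integral\<^sup>L ?M (\<lambda>(x, y). G y * (F x * indicator {..y} x))
      = (\<integral>y. G y * (\<integral>x. F x * indicator {..y} x \<partial>lborel) \<partial>lborel)"
    using lborel_pair.integral_snd[of "\<lambda>x y. G y * (F x * indicator {..y} x)"] upper by simp
  finally show ?thesis by simp
qed

lemma set_integral_Ioo_by_parts:
  fixes \<phi> \<psi> :: "real \<Rightarrow> real"
  assumes [measurable]: "\<phi> \<in> borel_measurable borel" "\<psi> \<in> borel_measurable borel"
    and \<phi>: "set_integrable lborel {a<..<b} \<phi>" and \<psi>: "set_integrable lborel {a<..<b} \<psi>"
  shows "set_integrable lborel {a<..<b} (\<lambda>x. \<phi> x * (LINT t:{a<..<x}|lborel. \<psi> t))"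
    and "set_integrable lborel {a<..<b} (\<lambda>x. (LINT t:{a<..<x}|lborel. \<phi> t) * \<psi> x)"
    and "(LINT x:{a<..<b}|lborel. \<phi> x * (LINT t:{a<..<x}|lborel. \<psi> t))
       + (LINT x:{a<..<b}|lborel. (LINT t:{a<..<x}|lborel. \<phi> t) * \<psi> x)
       = (LINT x:{a<..<b}|lborel. \<phi> x) * (LINT x:{a<..<b}|lborel. \<psi> x)"
proof -
  note [measurable] = borel_measurable_indefinite_integral[of \<psi> a] borel_measurable_indefinite_integral[of \<phi> a]
  show "set_integrable lborel {a<..<b} (\<lambda>x. \<phi> x * (LINT t:{a<..<x}|lborel. \<psi> t))"
    by (rule set_integrable_mult_bounded[OF _ _ _ \<phi>, where C="LINT t:{a<..<b}|lborel. \<bar>\<psi> t\<bar>"])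
       (auto intro!: abs_indefinite_integral_le[OF \<psi>])
  have "set_integrable lborel {a<..<b} (\<lambda>x. \<psi> x * (LINT t:{a<..<x}|lborel. \<phi> t))"
    by (rule set_integrable_mult_bounded[OF _ _ _ \<psi>, where C="LINT t:{a<..<b}|lborel. \<bar>\<phi> t\<bar>"])
       (auto intro!: abs_indefinite_integral_le[OF \<phi>])
  then show "set_integrable lborel {a<..<b} (\<lambda>x. (LINT t:{a<..<x}|lborel. \<phi> t) * \<psi> x)"
    by (simp add: mult.commute)
  define F where "F x = indicator {a<..<b} x * \<phi> x" for x
  define G where "G x = indicator {a<..<b} x * \<psi> x" for x
  have [measurable]: "F \<in> borel_measurable borel" "G \<in> borel_measurable borel"
    unfolding F_def G_def by measurable
  have F: "integrable lborel F" and G: "integrable lborel G"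
    using \<phi> \<psi> unfolding F_def G_def set_integrable_def by simp_all
  have "(\<integral>x. F x * (\<integral>y. G y * indicator {..<x} y \<partial>lborel) \<partial>lborel)
      = (LINT x:{a<..<b}|lborel. \<phi> x * (LINT t:{a<..<x}|lborel. \<psi> t))"
    unfolding set_lebesgue_integral_def
  proof (intro Bochner_Integration.integral_cong refl)
    fix x
    show "F x * (\<integral>y. G y * indicator {..<x} y \<partial>lborel)
        = indicator {a<..<b} x *\<^sub>R (\<phi> x * (\<integral>t. indicator {a<..<x} t *\<^sub>R \<psi> t \<partial>lborel))"
    proof (cases "x \<in> {a<..<b}")
      case True
      then have "(\<integral>y. G y * indicator {..<x} y \<partial>lborel) = (\<integral>t. indicator {a<..<x} t *\<^sub>R \<psi> t \<partial>lborel)"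
        unfolding G_def by (intro Bochner_Integration.integral_cong) (auto split: split_indicator)
      with True show ?thesis unfolding F_def by simp
    qed (simp add: F_def)
  qed
  moreover have "(\<integral>y. G y * (\<integral>x. F x * indicator {..y} x \<partial>lborel) \<partial>lborel)
      = (LINT x:{a<..<b}|lborel. (LINT t:{a<..<x}|lborel. \<phi> t) * \<psi> x)"
    unfolding set_lebesgue_integral_def
  proof (intro Bochner_Integration.integral_cong refl)
    fix y
    show "G y * (\<integral>x. F x * indicator {..y} x \<partial>lborel)
        = indicator {a<..<b} y *\<^sub>R ((\<integral>t. indicator {a<..<y} t *\<^sub>R \<phi> t \<partial>lborel) * \<psi> y)"
    proof (cases "y \<in> {a<..<b}")
      case True
      \<comment> \<open>the closed upper end \<open>{..y}\<close> differs from \<open>{..<y}\<close> by a null set\<close>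
      then have "(\<integral>x. F x * indicator {..y} x \<partial>lborel) = (\<integral>t. indicator {a<..<y} t *\<^sub>R \<phi> t \<partial>lborel)"
        unfolding F_def
        by (intro integral_cong_AE)
           (auto intro!: eventually_mono[OF AE_lborel_singleton[of y]] split: split_indicator)
      with True show ?thesis unfolding G_def by simp
    qed (simp add: G_def)
  qed
  moreover have "(\<integral>x. F x \<partial>lborel) * (\<integral>y. G y \<partial>lborel)
      = (LINT x:{a<..<b}|lborel. \<phi> x) * (LINT x:{a<..<b}|lborel. \<psi> x)"
    unfolding F_def G_def set_lebesgue_integral_def by simp
  ultimately show "(LINT x:{a<..<b}|lborel. \<phi> x * (LINT t:{a<..<x}|lborel. \<psi> t))
       + (LINT x:{a<..<b}|lborel. (LINT t:{a<..<x}|lborel. \<phi> t) * \<psi> x)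
       = (LINT x:{a<..<b}|lborel. \<phi> x) * (LINT x:{a<..<b}|lborel. \<psi> x)"
    using integral_mult_split_diagonal[OF _ _ F G] by simp
qed

lemma lebesgue_set_integral_eq_lborel_AE:
  fixes f f' :: "real \<Rightarrow> real"
  assumes [measurable]: "f \<in> borel_measurable lebesgue" "f' \<in> borel_measurable borel" "A \<in> sets borel"
    and eq: "AE x in lborel. f x = f' x"
  shows "(LINT x:A|lebesgue. f x) = (LINT x:A|lborel. f' x)"
    and "set_integrable lebesgue A f \<longleftrightarrow> set_integrable lborel A f'"
proof -
  have [measurable]: "(\<lambda>x. indicator A x *\<^sub>R f' x) \<in> borel_measurable lborel"
    by measurable
  then have f'_lebesgue: "(\<lambda>x. indicator A x *\<^sub>R f' x) \<in> borel_measurable lebesgue"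
    by (rule measurable_completion)
  have f_lebesgue: "(\<lambda>x. indicator A x *\<^sub>R f x) \<in> borel_measurable lebesgue"
    by (intro borel_measurable_scaleR borel_measurable_indicator) simp_all
  have eq': "AE x in lebesgue. indicator A x *\<^sub>R f x = indicator A x *\<^sub>R f' x"
    by (rule AE_completion) (use eq in \<open>auto elim: eventually_mono\<close>)
  show "(LINT x:A|lebesgue. f x) = (LINT x:A|lborel. f' x)"
    unfolding set_lebesgue_integral_def
    by (subst integral_cong_AE[OF f_lebesgue f'_lebesgue eq']) (simp_all add: integral_completion)
  show "set_integrable lebesgue A f \<longleftrightarrow> set_integrable lborel A f'"
    unfolding set_integrable_def
    by (subst integrable_cong_AE[OF f_lebesgue f'_lebesgue eq']) (simp_all add: integrable_completion)
qed

section \<open>The substitution \<open>s\<close>\<close>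

locale bounded_coefficient =
  fixes p :: "real \<Rightarrow> real" and \<beta> a :: real
  assumes p_measurable [measurable]: "p \<in> borel_measurable borel"
    and p_lower: "\<And>x. 1 / \<beta> \<le> p x" and p_upper: "\<And>x. p x \<le> \<beta>" and \<beta>_gt_1: "1 < \<beta>"
begin

definition s :: "real \<Rightarrow> real" where
  "s x = (LINT t:{a<..<x}|lborel. 1 / p t)"

lemma p_pos: "0 < p x"
  using p_lower[of x] \<beta>_gt_1 by (smt (verit) divide_pos_pos)

lemma inverse_p_lower: "1 / \<beta> \<le> 1 / p x"
  using p_upper[of x] p_pos[of x] by (intro divide_left_mono) auto

lemma inverse_p_upper: "1 / p x \<le> \<beta>"
  using p_lower[of x] p_pos[of x] \<beta>_gt_1 by (simp add: field_simps)

lemma abs_inverse_p_le: "\<bar>1 / p x\<bar> \<le> \<beta>"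
  using inverse_p_upper[of x] p_pos[of x] by simp

lemma set_integrable_inverse_p: "set_integrable lborel {l<..<r} (\<lambda>t. 1 / p t)"
  by (rule set_integrable_Ioo_bounded[OF _ abs_inverse_p_le]) measurable

lemma s_eq_0: "x \<le> a \<Longrightarrow> s x = 0"
  unfolding s_def by (simp add: set_lebesgue_integral_def)

lemma s_max: "s (max a x) = s x"
  by (cases "a \<le> x") (simp_all add: max_def s_eq_0)

lemma s_diff: "x \<le> y \<Longrightarrow> s y - s x = (LINT t:{max a x<..<max a y}|lborel. 1 / p t)"
  using set_integral_Ioo_split[OF _ set_integrable_inverse_p, of a "max a x" "max a y"]
  unfolding s_max[of x, symmetric] s_max[of y, symmetric] by (simp add: s_def)

lemma s_diff_bounds:
  assumes "x \<le> y"
  shows "(max a y - max a x) / \<beta> \<le> s y - s x" and "s y - s x \<le> \<beta> * (y - x)"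
proof -
  have le: "max a x \<le> max a y" using assms by simp
  have "(LINT t:{max a x<..<max a y}|lborel. 1 / \<beta>) \<le> (LINT t:{max a x<..<max a y}|lborel. 1 / p t)"
    by (rule set_integral_mono[OF set_integrable_Ioo_const set_integrable_inverse_p inverse_p_lower])
  then show "(max a y - max a x) / \<beta> \<le> s y - s x"
    using le by (simp add: s_diff[OF assms] set_integral_const)
  have "(LINT t:{max a x<..<max a y}|lborel. 1 / p t) \<le> (LINT t:{max a x<..<max a y}|lborel. \<beta>)"
    by (rule set_integral_mono[OF set_integrable_inverse_p set_integrable_Ioo_const inverse_p_upper])
  also have "\<dots> \<le> \<beta> * (y - x)"
    using le assms \<beta>_gt_1 by (simp add: set_integral_const mult_left_mono)
  finally show "s y - s x \<le> \<beta> * (y - x)"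
    by (simp add: s_diff[OF assms])
qed

lemma s_mono: "x \<le> y \<Longrightarrow> s x \<le> s y"
  using s_diff_bounds(1)[of x y] \<beta>_gt_1 by (smt (verit) divide_nonneg_pos max.mono)

lemma s_strict_mono: "a \<le> x \<Longrightarrow> x < y \<Longrightarrow> s x < s y"
  using s_diff_bounds(1)[of x y] \<beta>_gt_1 by (smt (verit) divide_pos_pos)

lemma s_nonneg: "0 \<le> s x"
  using s_mono[of "min a x" x] s_eq_0[of "min a x"] by simp

lemma s_pos: "a < x \<Longrightarrow> 0 < s x"
  using s_strict_mono[of a x] s_eq_0[of a] by simp

lemma s_lipschitz: "\<beta>-lipschitz_on UNIV s"
proof (rule lipschitz_onI)
  fix x y
  show "dist (s x) (s y) \<le> \<beta> * dist x y"
    using s_diff_bounds(2)[of x y] s_diff_bounds(2)[of y x] s_mono[of x y] s_mono[of y x]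
    by (cases "x \<le> y") (auto simp: dist_real_def)
qed (use \<beta>_gt_1 in simp)

lemma continuous_on_s: "continuous_on UNIV s"
  by (rule lipschitz_on_continuous_on[OF s_lipschitz])

lemma borel_measurable_s [measurable]: "s \<in> borel_measurable borel"
  by (rule borel_measurable_continuous_onI[OF continuous_on_s])

lemma integral_inverse_p_superlevel:
  assumes "a \<le> y"
  shows "(\<integral>x. indicator {a<..<y} x * indicator {x. c < s x} x * (1 / p x) \<partial>lborel) = max 0 (s y - max 0 c)"
proof -
  have sy: "s y = (\<integral>x. indicator {a<..<y} x * (1 / p x) \<partial>lborel)"
    unfolding s_def set_lebesgue_integral_def by simp
  consider "c \<le> 0" | "0 < c" "c < s y" | "s y \<le> c" by linarith
  then show ?thesis
  proof cases
    case 1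
    then have "(\<integral>x. indicator {a<..<y} x * indicator {x. c < s x} x * (1 / p x) \<partial>lborel)
        = (\<integral>x. indicator {a<..<y} x * (1 / p x) \<partial>lborel)"
      using s_pos by (intro Bochner_Integration.integral_cong) (force split: split_indicator)+
    with 1 show ?thesis using sy s_nonneg[of y] by simp
  next
    case 2
    then obtain t where t: "a \<le> t" "t \<le> y" "s t = c"
      using IVT'[of s a c y] s_eq_0[of a] assms continuous_on_subset[OF continuous_on_s] by force
    have "(\<integral>x. indicator {a<..<y} x * indicator {x. c < s x} x * (1 / p x) \<partial>lborel)
        = (\<integral>x. indicator {t<..<y} x * (1 / p x) \<partial>lborel)"
    proof (intro Bochner_Integration.integral_cong refl)
      fix x
      show "indicator {a<..<y} x * indicator {x. c < s x} x * (1 / p x) = indicator {t<..<y} x * (1 / p x)"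
        using t s_strict_mono[of t x] s_mono[of x t] by (cases "t < x") (auto split: split_indicator)
    qed
    also have "\<dots> = s y - s t"
      using s_diff[OF t(2)] t(1) assms unfolding set_lebesgue_integral_def by (simp add: max_absorb2)
    finally show ?thesis using 2 t by simp
  next
    case 3
    have "(\<lambda>x. indicator {a<..<y} x * indicator {x. c < s x} x * (1 / p x)) = (\<lambda>x. 0::real)"
    proof
      show "indicator {a<..<y} x * indicator {x. c < s x} x * (1 / p x) = (0::real)" for x
        using 3 s_mono[of x y] by (cases "x < y") (auto split: split_indicator)
    qed
    with 3 show ?thesis by simp
  qed
qed

text \<open>The substitution \<open>\<sigma> = s x\<close> pushes \<open>dx / p\<close> on \<open>(a, y)\<close> forward to Lebesgue measure
  on \<open>(0, s y)\<close>; the two measures are compared on the half-lines \<open>(c, \<infinity>)\<close>.\<close>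
lemma distr_s_density:
  assumes "a \<le> y"
  shows "distr (density lborel (\<lambda>x. ennreal (indicator {a<..<y} x * (1 / p x)))) lborel s
       = density lborel (\<lambda>\<sigma>. ennreal (indicator {0<..<s y} \<sigma>))"
proof (rule measure_eqI_lessThan)
  let ?D = "density lborel (\<lambda>x. ennreal (indicator {a<..<y} x * (1 / p x)))"
  have left: "emeasure (distr ?D lborel s) {c<..} = ennreal (s y - max 0 c)" for c
  proof -
    have "emeasure (distr ?D lborel s) {c<..} = emeasure ?D (s -` {c<..} \<inter> space lborel)"
      by (subst emeasure_distr) auto
    also have "\<dots> = (\<integral>\<^sup>+x. ennreal (indicator {a<..<y} x * (1 / p x)) * indicator (s -` {c<..} \<inter> space lborel) x \<partial>lborel)"
      by (rule emeasure_density) (use measurable_sets_borel[OF borel_measurable_s, of "{c<..}"] in auto)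
    also have "\<dots> = (\<integral>\<^sup>+x. ennreal (indicator {a<..<y} x * indicator {x. c < s x} x * (1 / p x)) \<partial>lborel)"
      by (intro nn_integral_cong) (auto split: split_indicator)
    also have "\<dots> = ennreal (\<integral>x. indicator {a<..<y} x * indicator {x. c < s x} x * (1 / p x) \<partial>lborel)"
    proof (rule nn_integral_eq_integral)
      have "integrable lborel (\<lambda>x. indicator {a<..<y} x *\<^sub>R (1 / p x))"
        using set_integrable_inverse_p[of a y] unfolding set_integrable_def .
      then show "integrable lborel (\<lambda>x. indicator {a<..<y} x * indicator {x. c < s x} x * (1 / p x))"
        by (rule Bochner_Integration.integrable_bound) (auto split: split_indicator)
      show "AE x in lborel. 0 \<le> indicator {a<..<y} x * indicator {x. c < s x} x * (1 / p x)"
        using p_pos by (auto intro!: less_imp_le split: split_indicator)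
    qed
    also have "\<dots> = ennreal (s y - max 0 c)"
      by (subst integral_inverse_p_superlevel[OF assms]) (simp add: max_def ennreal_neg)
    finally show ?thesis .
  qed
  have right: "emeasure (density lborel (\<lambda>\<sigma>. ennreal (indicator {0<..<s y} \<sigma>))) {c<..} = ennreal (s y - max 0 c)" for c
  proof -
    have "emeasure (density lborel (\<lambda>\<sigma>. ennreal (indicator {0<..<s y} \<sigma>))) {c<..}
        = (\<integral>\<^sup>+x. ennreal (indicator {0<..<s y} x) * indicator {c<..} x \<partial>lborel)"
      by (rule emeasure_density) auto
    also have "\<dots> = (\<integral>\<^sup>+x. indicator {max 0 c<..<s y} x \<partial>lborel)"
      by (intro nn_integral_cong) (auto split: split_indicator)
    also have "\<dots> = emeasure lborel {max 0 c<..<s y}"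
      by simp
    also have "\<dots> = ennreal (s y - max 0 c)"
      by (cases "max 0 c \<le> s y") (auto simp: ennreal_neg)
    finally show ?thesis .
  qed
  show "sets (distr ?D lborel s) = sets borel" "sets (density lborel (\<lambda>\<sigma>. ennreal (indicator {0<..<s y} \<sigma>))) = sets borel"
    by simp_all
  show "emeasure (distr ?D lborel s) {c<..} < \<infinity>"
    "emeasure (distr ?D lborel s) {c<..} = emeasure (density lborel (\<lambda>\<sigma>. ennreal (indicator {0<..<s y} \<sigma>))) {c<..}" for c
    using left right by simp_all
qed

lemma set_integral_comp_s:
  assumes "a \<le> y" and [measurable]: "F \<in> borel_measurable borel"
    and F: "set_integrable lborel {0<..<s y} F"
  shows "set_integrable lborel {a<..<y} (\<lambda>x. F (s x) / p x)"
    and "(LINT x:{a<..<y}|lborel. F (s x) / p x) = (LINT \<sigma>:{0<..<s y}|lborel. F \<sigma>)"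
proof -
  let ?D = "density lborel (\<lambda>x. ennreal (indicator {a<..<y} x * (1 / p x)))"
  let ?E = "density lborel (\<lambda>\<sigma>. ennreal (indicator {0<..<s y} \<sigma>))"
  have distr: "distr ?D lborel s = ?E" by (rule distr_s_density[OF assms(1)])
  have nonneg: "AE x in lborel. 0 \<le> indicator {a<..<y} x * (1 / p x)"
    using p_pos by (auto intro!: less_imp_le split: split_indicator)
  have "integrable ?E F"
    using F unfolding set_integrable_def by (subst integrable_real_density) auto
  then have "integrable ?D (\<lambda>x. F (s x))"
    unfolding distr[symmetric] by (subst (asm) integrable_distr_eq) auto
  then have "integrable lborel (\<lambda>x. indicator {a<..<y} x * (1 / p x) * F (s x))"
    using nonneg by (subst (asm) integrable_real_density) auto
  then show "set_integrable lborel {a<..<y} (\<lambda>x. F (s x) / p x)"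
    unfolding set_integrable_def by (simp add: field_simps)
  have "(LINT \<sigma>:{0<..<s y}|lborel. F \<sigma>) = integral\<^sup>L ?E F"
    unfolding set_lebesgue_integral_def by (subst integral_real_density) auto
  also have "\<dots> = integral\<^sup>L ?D (\<lambda>x. F (s x))"
    unfolding distr[symmetric] by (rule integral_distr) auto
  also have "\<dots> = (\<integral>x. indicator {a<..<y} x * (1 / p x) * F (s x) \<partial>lborel)"
    using nonneg by (subst integral_real_density) auto
  also have "\<dots> = (LINT x:{a<..<y}|lborel. F (s x) / p x)"
    unfolding set_lebesgue_integral_def by (simp add: field_simps)
  finally show "(LINT x:{a<..<y}|lborel. F (s x) / p x) = (LINT \<sigma>:{0<..<s y}|lborel. F \<sigma>)" by simp
qed

text \<open>\<open>ext_cont\<close> extends \<open>H'\<close> continuously from \<open>[0, s c]\<close> to the whole line, so that the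
  integrand is Borel; on \<open>(a, c)\<close> it agrees with \<open>H' (s x) / p x\<close>.\<close>
lemma set_integral_deriv_comp_s:
  assumes "a \<le> y" "y \<le> c"
    and cont: "continuous_on {0..s c} H'"
    and deriv: "\<And>\<sigma>. \<sigma> \<in> {0..s c} \<Longrightarrow> (H has_real_derivative H' \<sigma>) (at \<sigma>)"
  shows "set_integrable lborel {a<..<y} (\<lambda>x. ext_cont H' 0 (s c) (s x) / p x)"
    and "(LINT x:{a<..<y}|lborel. ext_cont H' 0 (s c) (s x) / p x) = H (s y) - H 0"
proof -
  define F where "F = ext_cont H' 0 (s c)"
  have "continuous_on UNIV F"
    unfolding F_def by (rule continuous_on_ext_cont) (simp add: cont)
  then have F_measurable [measurable]: "F \<in> borel_measurable borel"
    by (rule borel_measurable_continuous_onI)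
  have "set_integrable lborel {0..s y} F"
    by (rule borel_integrable_atLeastAtMost') (use \<open>continuous_on UNIV F\<close> continuous_on_subset in blast)
  then have F: "set_integrable lborel {0<..<s y} F"
    by (rule set_integrable_subset) auto
  note comp = set_integral_comp_s[OF assms(1) F_measurable F, unfolded F_def]
  show "set_integrable lborel {a<..<y} (\<lambda>x. ext_cont H' 0 (s c) (s x) / p x)"
    by (rule comp(1))
  have "(LINT x:{a<..<y}|lborel. ext_cont H' 0 (s c) (s x) / p x) = (LBINT \<sigma>=ereal 0..ereal (s y). F \<sigma>)"
    using comp(2) s_nonneg[of y] by (simp add: interval_integral_Ioo F_def)
  also have "\<dots> = H (s y) - H 0"
  proof (rule interval_integral_FTC_finite)
    show "continuous_on {min 0 (s y)..max 0 (s y)} F"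
      using \<open>continuous_on UNIV F\<close> by (rule continuous_on_subset) simp
    fix \<sigma> assume "min 0 (s y) \<le> \<sigma>" "\<sigma> \<le> max 0 (s y)"
    then have \<sigma>: "\<sigma> \<in> {0..s c}" using s_nonneg[of y] s_mono[OF \<open>y \<le> c\<close>] by auto
    show "(H has_vector_derivative F \<sigma>) (at \<sigma> within {min 0 (s y)..max 0 (s y)})"
      using deriv[OF \<sigma>] \<sigma> unfolding F_def
      by (simp add: has_real_derivative_iff_has_vector_derivative has_vector_derivative_at_within)
  qed
  finally show "(LINT x:{a<..<y}|lborel. ext_cont H' 0 (s c) (s x) / p x) = H (s y) - H 0" .
qed

end

section \<open>The weighted Wirtinger inequality\<close>

lemma cot_riccati_has_real_derivative:
  assumes "sin (d + k * x) \<noteq> 0"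
  shows "((\<lambda>x. k * cos (d + k * x) / sin (d + k * x)) has_real_derivative
     - (k\<^sup>2 + (k * cos (d + k * x) / sin (d + k * x))\<^sup>2)) (at x)"
proof -
  have "((\<lambda>x. k * cos (d + k * x) / sin (d + k * x)) has_real_derivative
     ((k * (- sin (d + k * x) * k)) * sin (d + k * x) - k * cos (d + k * x) * (cos (d + k * x) * k))
       / (sin (d + k * x))\<^sup>2) (at x)"
    using assms by (auto intro!: derivative_eq_intros simp: power2_eq_square)
  moreover have "((k * (- sin (d + k * x) * k)) * sin (d + k * x) - k * cos (d + k * x) * (cos (d + k * x) * k))
      / (sin (d + k * x))\<^sup>2 = - (k\<^sup>2 + (k * cos (d + k * x) / sin (d + k * x))\<^sup>2)"
  proof -
    have "(sin (d + k * x))\<^sup>2 + (cos (d + k * x))\<^sup>2 = 1" by simp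
    then show ?thesis using assms by (simp add: field_simps power2_eq_square)
  qed
  ultimately show ?thesis by simp
qed

locale dirichlet_data = bounded_coefficient +
  fixes b :: real and g :: "real \<Rightarrow> real"
  assumes a_less_b: "a < b" and g_measurable [measurable]: "g \<in> borel_measurable borel"
    and g_integrable: "set_integrable lborel {a<..<b} g"
    and g_sq_integrable: "set_integrable lborel {a<..<b} (\<lambda>x. (g x)\<^sup>2)"
    and g_integral_eq_0: "(LINT t:{a<..<b}|lborel. g t) = 0"
begin

definition u :: "real \<Rightarrow> real" where
  "u x = (LINT t:{a<..<x}|lborel. g t)"

definition energy :: real where
  "energy = (LINT x:{a<..<b}|lborel. p x * (g x)\<^sup>2)"

lemma borel_measurable_u [measurable]: "u \<in> borel_measurable borel"
  unfolding u_def by (rule borel_measurable_indefinite_integral) simp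

lemma u_b: "u b = 0"
  using g_integral_eq_0 by (simp add: u_def)

lemma abs_u_le: "x \<le> b \<Longrightarrow> \<bar>u x\<bar> \<le> (LINT t:{a<..<b}|lborel. \<bar>g t\<bar>)"
  unfolding u_def by (rule abs_indefinite_integral_le[OF g_integrable])

lemma set_integrable_u_sq_mult:
  assumes [measurable]: "f \<in> borel_measurable borel" and bound: "\<And>x. x \<in> {a<..<b} \<Longrightarrow> \<bar>f x\<bar> \<le> C"
  shows "set_integrable lborel {a<..<b} (\<lambda>x. (u x)\<^sup>2 * f x)"
proof (rule set_integrable_Ioo_bounded)
  fix x assume x: "x \<in> {a<..<b}"
  have "\<bar>(u x)\<^sup>2 * f x\<bar> = \<bar>u x\<bar>\<^sup>2 * \<bar>f x\<bar>" by (simp add: abs_mult power_abs)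
  also have "\<dots> \<le> (LINT t:{a<..<b}|lborel. \<bar>g t\<bar>)\<^sup>2 * C"
    using x abs_u_le[of x] bound[OF x] by (intro mult_mono power_mono) auto
  finally show "\<bar>(u x)\<^sup>2 * f x\<bar> \<le> (LINT t:{a<..<b}|lborel. \<bar>g t\<bar>)\<^sup>2 * C" .
qed simp

lemma set_integrable_u_sq_div_p: "set_integrable lborel {a<..<b} (\<lambda>x. (u x)\<^sup>2 / p x)"
  using set_integrable_u_sq_mult[OF _ abs_inverse_p_le] by simp

lemma set_integrable_p_g_sq: "set_integrable lborel {a<..<b} (\<lambda>x. p x * (g x)\<^sup>2)"
  using set_integrable_mult_bounded[OF _ _ _ g_sq_integrable, of p \<beta>] p_pos p_upper
  by (simp add: mult.commute abs_le_iff less_imp_le)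

lemma p_g_sq_nonneg: "0 \<le> p x * (g x)\<^sup>2"
  using p_pos[of x] by simp

lemma energy_nonneg: "0 \<le> energy"
  unfolding energy_def by (rule set_integral_nonneg) (rule p_g_sq_nonneg)

lemma u_sq_eq_integral:
  assumes "y \<le> b"
  shows "set_integrable lborel {a<..<y} (\<lambda>x. 2 * g x * u x)"
    and "(u y)\<^sup>2 = (LINT x:{a<..<y}|lborel. 2 * g x * u x)"
proof -
  have g: "set_integrable lborel {a<..<y} g"
    by (rule set_integrable_subset[OF g_integrable]) (use assms in auto)
  note by_parts = set_integral_Ioo_by_parts[OF g_measurable g_measurable g g, folded u_def]
  show "set_integrable lborel {a<..<y} (\<lambda>x. 2 * g x * u x)"
    using set_integrable_mult_right[OF by_parts(1), of 2] by (simp add: mult.assoc)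
  have "(LINT x:{a<..<y}|lborel. 2 * g x * u x) = 2 * (LINT x:{a<..<y}|lborel. g x * u x)"
    by (simp add: mult.assoc)
  also have "\<dots> = (u y)\<^sup>2"
    using by_parts(3) by (simp add: u_def power2_eq_square mult.commute)
  finally show "(u y)\<^sup>2 = (LINT x:{a<..<y}|lborel. 2 * g x * u x)" ..
qed

lemma u_sq_le_energy:
  assumes "x \<le> b"
  shows "(u x)\<^sup>2 \<le> s b * energy"
proof (cases "a < x")
  case False
  then have "u x = 0" by (simp add: u_def set_lebesgue_integral_def)
  then show ?thesis using s_nonneg[of b] energy_nonneg by simp
next
  case True
  have sx: "0 < s x" by (rule s_pos[OF True])
  define c where "c = u x / s x"
  define energy_x where "energy_x = (LINT t:{a<..<x}|lborel. p t * (g t)\<^sup>2)"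
  have pg: "set_integrable lborel {a<..<x} (\<lambda>t. p t * (g t)\<^sup>2)"
    by (rule set_integrable_subset[OF set_integrable_p_g_sq]) (use assms in auto)
  have "set_integrable lborel {a<..<x} g"
    by (rule set_integrable_subset[OF g_integrable]) (use assms in auto)
  then have g: "set_integrable lborel {a<..<x} (\<lambda>t. (2 * c) * g t)"
    by (rule set_integrable_mult_right)
  have inv_p: "set_integrable lborel {a<..<x} (\<lambda>t. c\<^sup>2 * (1 / p t))"
    using set_integrable_inverse_p by (rule set_integrable_mult_right)
  have "0 \<le> (LINT t:{a<..<x}|lborel. p t * (g t - c / p t)\<^sup>2)"
    by (rule set_integral_nonneg) (simp add: p_pos less_imp_le)
  also have "\<dots> = (LINT t:{a<..<x}|lborel. (p t * (g t)\<^sup>2 - (2 * c) * g t) + c\<^sup>2 * (1 / p t))"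
  proof (rule set_lebesgue_integral_cong; clarify?)
    fix t
    have "p t \<noteq> 0" using p_pos[of t] by simp
    then show "p t * (g t - c / p t)\<^sup>2 = (p t * (g t)\<^sup>2 - (2 * c) * g t) + c\<^sup>2 * (1 / p t)"
      by (simp add: field_simps power2_eq_square)
  qed simp
  also have "\<dots> = (LINT t:{a<..<x}|lborel. p t * (g t)\<^sup>2 - (2 * c) * g t) + (LINT t:{a<..<x}|lborel. c\<^sup>2 * (1 / p t))"
    by (rule set_integral_add(2)[OF set_integral_diff(1)[OF pg g] inv_p])
  also have "\<dots> = energy_x - 2 * c * u x + c\<^sup>2 * s x"
    unfolding energy_x_def u_def s_def set_integral_diff(2)[OF pg g] set_integral_mult_right ..
  also have "\<dots> = energy_x - (u x)\<^sup>2 / s x"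
    using sx unfolding c_def by (simp add: field_simps power2_eq_square)
  finally have "(u x)\<^sup>2 \<le> s x * energy_x"
    using sx by (simp add: field_simps)
  also have "\<dots> \<le> s b * energy"
  proof (rule mult_mono)
    show "s x \<le> s b" by (rule s_mono[OF assms])
    show "energy_x \<le> energy"
      unfolding energy_x_def energy_def
      by (rule set_integral_Ioo_mono_set[OF set_integrable_p_g_sq assms p_g_sq_nonneg])
    show "0 \<le> energy_x"
      unfolding energy_x_def by (rule set_integral_nonneg) (rule p_g_sq_nonneg)
  qed (rule s_nonneg)
  finally show ?thesis .
qed

lemma integral_by_parts_comp_s:
  assumes cont: "continuous_on {0..s b} H'"
    and deriv: "\<And>\<sigma>. \<sigma> \<in> {0..s b} \<Longrightarrow> (H has_real_derivative H' \<sigma>) (at \<sigma>)"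
  shows "set_integrable lborel {a<..<b} (\<lambda>x. 2 * g x * u x * H (s x))"
    and "set_integrable lborel {a<..<b} (\<lambda>x. (u x)\<^sup>2 * H' (s x) / p x)"
    and "(LINT x:{a<..<b}|lborel. 2 * g x * u x * H (s x))
       = - (LINT x:{a<..<b}|lborel. (u x)\<^sup>2 * H' (s x) / p x)"
proof -
  define \<phi> where "\<phi> x = 2 * g x * u x" for x
  define \<eta> where "\<eta> = (\<lambda>x. ext_cont H' 0 (s b) (s x) / p x)"
  have "ext_cont H' 0 (s b) \<in> borel_measurable borel"
    by (intro borel_measurable_continuous_onI continuous_on_ext_cont) (simp add: cont)
  then have measurable [measurable]: "\<phi> \<in> borel_measurable borel" "\<eta> \<in> borel_measurable borel"
    unfolding \<phi>_def \<eta>_def by measurable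
  have \<eta>_eq: "\<eta> x = H' (s x) / p x" if "x \<le> b" for x
    using that s_nonneg[of x] s_mono[of x b] by (simp add: \<eta>_def)
  note \<eta> = set_integral_deriv_comp_s[OF _ _ cont deriv, folded \<eta>_def]
  have \<phi>: "set_integrable lborel {a<..<b} \<phi>" and "(LINT x:{a<..<b}|lborel. \<phi> x) = 0"
    using u_sq_eq_integral[of b] u_b by (simp_all add: \<phi>_def[abs_def])
  note parts = set_integral_Ioo_by_parts[OF measurable \<phi> \<eta>(1)[OF less_imp_le[OF a_less_b] order_refl]]
  have first: "\<phi> x * (LINT t:{a<..<x}|lborel. \<eta> t) = 2 * g x * u x * H (s x) - H 0 * \<phi> x"
    if "x \<in> {a<..<b}" for x
  proof -
    have integral: "(LINT t:{a<..<x}|lborel. \<eta> t) = H (s x) - H 0"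
      using that by (intro \<eta>(2)) auto
    show ?thesis unfolding \<phi>_def integral by (simp add: algebra_simps)
  qed
  have second: "(LINT t:{a<..<x}|lborel. \<phi> t) * \<eta> x = (u x)\<^sup>2 * H' (s x) / p x"
    if "x \<in> {a<..<b}" for x
    using that u_sq_eq_integral(2)[of x] by (simp add: \<eta>_eq \<phi>_def[abs_def])
  have \<phi>H: "set_integrable lborel {a<..<b} (\<lambda>x. \<phi> x * (LINT t:{a<..<x}|lborel. \<eta> t) + H 0 * \<phi> x)"
    using parts(1) \<phi> by (rule set_integral_add(1)[OF _ set_integrable_mult_right])
  then show "set_integrable lborel {a<..<b} (\<lambda>x. 2 * g x * u x * H (s x))"
    by (rule set_integrable_cong[THEN iffD1, rotated 3]) (simp_all add: first)
  show "set_integrable lborel {a<..<b} (\<lambda>x. (u x)\<^sup>2 * H' (s x) / p x)"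
    using parts(2) by (rule set_integrable_cong[THEN iffD1, rotated 3]) (simp_all add: second)
  have "(LINT x:{a<..<b}|lborel. 2 * g x * u x * H (s x))
      = (LINT x:{a<..<b}|lborel. \<phi> x * (LINT t:{a<..<x}|lborel. \<eta> t) + H 0 * \<phi> x)"
    by (rule set_lebesgue_integral_cong) (simp_all add: first)
  also have "\<dots> = (LINT x:{a<..<b}|lborel. \<phi> x * (LINT t:{a<..<x}|lborel. \<eta> t))"
    using parts(1) \<phi> \<open>(LINT x:{a<..<b}|lborel. \<phi> x) = 0\<close> by simp
  also have "\<dots> = - (LINT x:{a<..<b}|lborel. (LINT t:{a<..<x}|lborel. \<phi> t) * \<eta> x)"
    using parts(3) \<open>(LINT x:{a<..<b}|lborel. \<phi> x) = 0\<close> by simp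
  also have "(LINT x:{a<..<b}|lborel. (LINT t:{a<..<x}|lborel. \<phi> t) * \<eta> x)
      = (LINT x:{a<..<b}|lborel. (u x)\<^sup>2 * H' (s x) / p x)"
    by (rule set_lebesgue_integral_cong) (simp_all add: second)
  finally show "(LINT x:{a<..<b}|lborel. 2 * g x * u x * H (s x))
      = - (LINT x:{a<..<b}|lborel. (u x)\<^sup>2 * H' (s x) / p x)" .
qed

text \<open>Riccati argument: \<open>H(\<sigma>) = k cot(d + k\<sigma>)\<close> solves \<open>H' = -(k\<^sup>2 + H\<^sup>2)\<close> on \<open>[0, s b]\<close>,
  and expanding \<open>0 \<le> \<integral> p (u' - u H(s) / p)\<^sup>2\<close> with one integration by parts leaves
  \<open>energy - k\<^sup>2 \<integral> u\<^sup>2 / p\<close>.\<close>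
lemma riccati_bound:
  assumes k: "0 < k" "k * s b < pi"
  shows "k\<^sup>2 * (LINT x:{a<..<b}|lborel. (u x)\<^sup>2 / p x) \<le> energy"
proof -
  define d where "d = (pi - k * s b) / 2"
  have d: "0 < d" "d + k * s b < pi"
    using k(2) unfolding d_def by (simp_all add: field_simps)
  define H where "H \<sigma> = k * cos (d + k * \<sigma>) / sin (d + k * \<sigma>)" for \<sigma>
  define H' where "H' \<sigma> = - (k\<^sup>2 + (H \<sigma>)\<^sup>2)" for \<sigma>
  have sin_pos: "0 < sin (d + k * \<sigma>)" if "\<sigma> \<in> {0..s b}" for \<sigma>
  proof (rule sin_gt_zero)
    have "0 \<le> k * \<sigma>" "k * \<sigma> \<le> k * s b"
      using that k by (auto intro: mult_left_mono)
    with d show "0 < d + k * \<sigma>" "d + k * \<sigma> < pi" by linarith+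
  qed
  have deriv: "(H has_real_derivative H' \<sigma>) (at \<sigma>)" if "\<sigma> \<in> {0..s b}" for \<sigma>
    unfolding H_def H'_def using cot_riccati_has_real_derivative[of d k \<sigma>] sin_pos[OF that] by simp
  have "continuous_on {0..s b} H"
    unfolding H_def by (intro continuous_intros) (auto dest: sin_pos)
  then have "continuous_on {0..s b} H'"
    unfolding H'_def by (intro continuous_intros)
  note parts = integral_by_parts_comp_s[OF this deriv]
  note pg = set_integrable_p_g_sq and u_sq_p = set_integrable_mult_right[OF set_integrable_u_sq_div_p, of "k\<^sup>2"]
  let ?P = "\<lambda>x. p x * (g x)\<^sup>2 - 2 * g x * u x * H (s x)"
  let ?Q = "\<lambda>x. ?P x - (u x)\<^sup>2 * H' (s x) / p x"
  have "0 \<le> (LINT x:{a<..<b}|lborel. p x * (g x - u x * H (s x) / p x)\<^sup>2)"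
    by (rule set_integral_nonneg) (simp add: p_pos less_imp_le)
  also have "\<dots> = (LINT x:{a<..<b}|lborel. ?Q x - k\<^sup>2 * ((u x)\<^sup>2 / p x))"
  proof (rule set_lebesgue_integral_cong; clarify?)
    fix x
    have "p x \<noteq> 0" using p_pos[of x] by simp
    then show "p x * (g x - u x * H (s x) / p x)\<^sup>2 = ?Q x - k\<^sup>2 * ((u x)\<^sup>2 / p x)"
      unfolding H'_def by (simp add: field_simps power2_eq_square)
  qed simp
  also have "\<dots> = (LINT x:{a<..<b}|lborel. ?Q x) - k\<^sup>2 * (LINT x:{a<..<b}|lborel. (u x)\<^sup>2 / p x)"
    using set_integral_diff(2)[OF set_integral_diff(1)[OF set_integral_diff(1)[OF pg parts(1)] parts(2)] u_sq_p]
    by (simp only: set_integral_mult_right)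
  also have "(LINT x:{a<..<b}|lborel. ?Q x) = (LINT x:{a<..<b}|lborel. ?P x) - (LINT x:{a<..<b}|lborel. (u x)\<^sup>2 * H' (s x) / p x)"
    by (rule set_integral_diff(2)[OF set_integral_diff(1)[OF pg parts(1)] parts(2)])
  also have "(LINT x:{a<..<b}|lborel. ?P x) = energy - (LINT x:{a<..<b}|lborel. 2 * g x * u x * H (s x))"
    unfolding energy_def by (rule set_integral_diff(2)[OF pg parts(1)])
  finally show ?thesis
    using parts(3) by simp
qed

lemma weighted_wirtinger: "(pi / s b)\<^sup>2 * (LINT x:{a<..<b}|lborel. (u x)\<^sup>2 / p x) \<le> energy"
proof -
  define A where "A = (LINT x:{a<..<b}|lborel. (u x)\<^sup>2 / p x)"
  have "0 \<le> A"
    unfolding A_def by (rule set_integral_nonneg) (simp add: p_pos less_imp_le)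
  have sb: "0 < s b" by (rule s_pos[OF a_less_b])
  show ?thesis unfolding A_def[symmetric]
  proof (rule dense_le)
    fix t assume t: "t < (pi / s b)\<^sup>2 * A"
    show "t \<le> energy"
    proof (cases "t \<le> 0")
      case True
      then show ?thesis using energy_nonneg by linarith
    next
      case False
      with t \<open>0 \<le> A\<close> have "0 < t" "0 < A"
        by (cases "A = 0"; simp)+
      define k where "k = sqrt (t / A)"
      have "0 < k" and k_sq: "k\<^sup>2 = t / A"
        unfolding k_def using \<open>0 < t\<close> \<open>0 < A\<close> by simp_all
      have "k\<^sup>2 < (pi / s b)\<^sup>2"
        unfolding k_sq using t \<open>0 < A\<close> by (simp add: field_simps)
      then have "k < pi / s b"
        by (rule power_less_imp_less_base) (use sb in simp)
      then have "k * s b < pi" using sb by (simp add: field_simps)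
      then have "k\<^sup>2 * A \<le> energy"
        unfolding A_def by (rule riccati_bound[OF \<open>0 < k\<close>])
      then show ?thesis unfolding k_sq using \<open>0 < A\<close> by simp
    qed
  qed
qed

end

section \<open>The Rayleigh quotient\<close>

locale rayleigh_data = dirichlet_data +
  fixes w q :: "real \<Rightarrow> real"
  assumes w_measurable [measurable]: "w \<in> borel_measurable borel"
    and w_lower: "\<And>x. 1 / \<beta> \<le> w x" and w_upper: "\<And>x. w x \<le> \<beta>"
    and q_measurable [measurable]: "q \<in> borel_measurable borel" and q_nonneg: "\<And>x. 0 \<le> q x"
    and u_nonzero: "\<exists>x\<in>{a<..<b}. u x \<noteq> 0"
begin

definition w_total :: real where
  "w_total = (LINT x:{a<..<b}|lborel. w x)"

definition w_deviation :: real where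
  "w_deviation = (LINT x:{a<..<b}|lborel. \<bar>w x - w_total / s b * (1 / p x)\<bar>)"

lemma w_pos: "0 < w x"
  using w_lower[of x] \<beta>_gt_1 by (smt (verit) divide_pos_pos)

lemma abs_w_le: "\<bar>w x\<bar> \<le> \<beta>"
  using w_pos[of x] w_upper[of x] by simp

lemma set_integrable_w_u_sq: "set_integrable lborel {a<..<b} (\<lambda>x. w x * (u x)\<^sup>2)"
  using set_integrable_u_sq_mult[OF w_measurable abs_w_le] by (simp add: mult.commute)

lemma w_u_sq_integral_pos: "0 < (LINT x:{a<..<b}|lborel. w x * (u x)\<^sup>2)"
proof -
  have "0 \<le> (LINT x:{a<..<b}|lborel. w x * (u x)\<^sup>2)"
    by (rule set_integral_nonneg) (simp add: w_pos less_imp_le)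
  moreover have "(LINT x:{a<..<b}|lborel. w x * (u x)\<^sup>2) \<noteq> 0"
  proof
    assume "(LINT x:{a<..<b}|lborel. w x * (u x)\<^sup>2) = 0"
    then have "AE x in lborel. indicator {a<..<b} x * (w x * (u x)\<^sup>2) = 0"
      using set_integrable_w_u_sq unfolding set_lebesgue_integral_def set_integrable_def
      by (subst (asm) integral_nonneg_eq_0_iff_AE)
         (auto intro!: mult_nonneg_nonneg less_imp_le[OF w_pos] split: split_indicator)
    then have u_0: "AE x in lborel. x \<in> {a<..<b} \<longrightarrow> u x = 0"
      by eventually_elim (auto simp: w_pos[THEN less_imp_neq, THEN not_sym] split: split_indicator)
    obtain x0 where x0: "x0 \<in> {a<..<b}" "u x0 \<noteq> 0" using u_nonzero by auto
    \<comment> \<open>\<open>u\<^sup>2\<close> is the indefinite integral of \<open>2 g u\<close>, so it vanishes where \<open>u\<close> vanishes a.e.\<close>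
    have "(u x0)\<^sup>2 = (LINT x:{a<..<x0}|lborel. 2 * g x * u x)"
      using u_sq_eq_integral(2)[of x0] x0 by auto
    also have "\<dots> = (LINT x:{a<..<x0}|lborel. 0)"
      unfolding set_lebesgue_integral_def
      by (rule integral_cong_AE) (use x0 in \<open>auto intro!: eventually_mono[OF u_0] split: split_indicator\<close>)
    finally show False using x0 by simp
  qed
  ultimately show ?thesis by linarith
qed

lemma w_u_sq_integral_le:
  "(LINT x:{a<..<b}|lborel. w x * (u x)\<^sup>2) \<le> energy * (s b * (w_total + pi\<^sup>2 * w_deviation) / pi\<^sup>2)"
proof -
  define c where "c = w_total / s b"
  define A where "A = (LINT x:{a<..<b}|lborel. (u x)\<^sup>2 / p x)"
  have sb: "0 < s b" by (rule s_pos[OF a_less_b])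
  have "0 \<le> c"
    unfolding c_def w_total_def using sb
    by (intro divide_nonneg_pos set_integral_nonneg) (simp_all add: w_pos less_imp_le)
  have dev: "set_integrable lborel {a<..<b} (\<lambda>x. \<bar>w x - c * (1 / p x)\<bar>)"
  proof (rule set_integrable_Ioo_bounded)
    fix x
    have "\<bar>\<bar>w x - c * (1 / p x)\<bar>\<bar> \<le> \<bar>w x\<bar> + \<bar>c\<bar> * \<bar>1 / p x\<bar>"
      by (metis abs_abs abs_mult abs_triangle_ineq4)
    also have "\<dots> \<le> \<beta> + \<bar>c\<bar> * \<beta>"
      by (intro add_mono mult_left_mono abs_w_le abs_inverse_p_le) auto
    finally show "\<bar>\<bar>w x - c * (1 / p x)\<bar>\<bar> \<le> \<beta> + \<bar>c\<bar> * \<beta>" .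
  qed simp
  note split = set_integral_add[OF set_integrable_mult_right[OF set_integrable_u_sq_div_p, of c]
      set_integrable_mult_right[OF dev, of "s b * energy"]]
  have "(LINT x:{a<..<b}|lborel. w x * (u x)\<^sup>2)
      \<le> (LINT x:{a<..<b}|lborel. c * ((u x)\<^sup>2 / p x) + (s b * energy) * \<bar>w x - c * (1 / p x)\<bar>)"
  proof (rule set_integral_mono[OF set_integrable_w_u_sq split(1)])
    fix x assume x: "x \<in> {a<..<b}"
    have "p x \<noteq> 0" using p_pos[of x] by simp
    then have "w x * (u x)\<^sup>2 = c * ((u x)\<^sup>2 / p x) + (w x - c * (1 / p x)) * (u x)\<^sup>2"
      by (simp add: field_simps)
    also have "\<dots> \<le> c * ((u x)\<^sup>2 / p x) + \<bar>w x - c * (1 / p x)\<bar> * (s b * energy)"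
      using u_sq_le_energy[of x] x
      by (intro add_left_mono order_trans[OF mult_right_mono[OF abs_ge_self] mult_left_mono]) auto
    finally show "w x * (u x)\<^sup>2 \<le> c * ((u x)\<^sup>2 / p x) + (s b * energy) * \<bar>w x - c * (1 / p x)\<bar>"
      by (simp add: mult.commute)
  qed
  also have "\<dots> = c * A + (s b * energy) * w_deviation"
    unfolding A_def w_deviation_def c_def[symmetric] split(2) set_integral_mult_right ..
  also have "\<dots> \<le> c * ((s b / pi)\<^sup>2 * energy) + (s b * energy) * w_deviation"
  proof -
    have "A \<le> (s b / pi)\<^sup>2 * energy"
      using weighted_wirtinger sb unfolding A_def by (simp add: field_simps power2_eq_square)
    with \<open>0 \<le> c\<close> show ?thesis by (intro add_right_mono mult_left_mono)
  qed
  also have "\<dots> = energy * (s b * (w_total + pi\<^sup>2 * w_deviation) / pi\<^sup>2)"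
    unfolding c_def using sb by (simp add: field_simps power2_eq_square)
  finally show ?thesis .
qed

lemma rayleigh_quotient_ge:
  "pi\<^sup>2 / (s b * (w_total + pi\<^sup>2 * w_deviation))
    \<le> (energy + (LINT x:{a<..<b}|lborel. q x * (u x)\<^sup>2)) / (LINT x:{a<..<b}|lborel. w x * (u x)\<^sup>2)"
proof -
  define K where "K = s b * (w_total + pi\<^sup>2 * w_deviation) / pi\<^sup>2"
  define denominator where "denominator = (LINT x:{a<..<b}|lborel. w x * (u x)\<^sup>2)"
  have den: "0 < denominator" "denominator \<le> energy * K"
    unfolding denominator_def K_def by (rule w_u_sq_integral_pos, rule w_u_sq_integral_le)
  then have "0 < K" using energy_nonneg by (smt (verit) mult_nonneg_nonpos)
  have "0 \<le> (LINT x:{a<..<b}|lborel. q x * (u x)\<^sup>2)"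
    by (rule set_integral_nonneg) (simp add: q_nonneg)
  moreover have "1 / K \<le> energy / denominator"
    using den \<open>0 < K\<close> by (simp add: field_simps)
  ultimately have "1 / K \<le> (energy + (LINT x:{a<..<b}|lborel. q x * (u x)\<^sup>2)) / denominator"
    using den by (smt (verit) divide_right_mono)
  then show ?thesis
    unfolding K_def denominator_def by simp
qed

lemma average_bound_eq:
  fixes p0 w0 :: "real \<Rightarrow> real"
  assumes [measurable]: "p0 \<in> borel_measurable lebesgue" "w0 \<in> borel_measurable lebesgue"
    and p_eq: "AE x in lborel. p0 x = p x" and w_eq: "AE x in lborel. w0 x = w x"
  shows "pi\<^sup>2 / (avg a b (\<lambda>x. 1 / p0 x) *
             (avg a b w0 + pi\<^sup>2 * avg a b (\<lambda>x. \<bar>w0 x - avg a b w0 / avg a b (\<lambda>x. 1 / p0 x) * (1 / p0 x)\<bar>))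
             * (b - a)\<^sup>2) = pi\<^sup>2 / (s b * (w_total + pi\<^sup>2 * w_deviation))"
proof -
  note lborel_eq = lebesgue_set_integral_eq_lborel_AE(1)
  define L where "L = b - a"
  have "0 < L" using a_less_b by (simp add: L_def)
  have inv_p: "avg a b (\<lambda>x. 1 / p0 x) = s b / L"
    unfolding avg_def L_def s_def using p_eq
    by (subst lborel_eq) (auto elim: eventually_mono)
  have w_avg: "avg a b w0 = w_total / L"
    unfolding avg_def L_def w_total_def using w_eq
    by (subst lborel_eq) (auto elim: eventually_mono)
  have "avg a b w0 / avg a b (\<lambda>x. 1 / p0 x) = w_total / s b"
    unfolding inv_p w_avg using \<open>0 < L\<close> by simp
  then have deviation: "avg a b (\<lambda>x. \<bar>w0 x - avg a b w0 / avg a b (\<lambda>x. 1 / p0 x) * (1 / p0 x)\<bar>) = w_deviation / L"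
    unfolding avg_def L_def w_deviation_def using w_eq p_eq
    by (subst lborel_eq) (auto elim: eventually_mono)
  have "s b / L * (w_total / L + pi\<^sup>2 * (w_deviation / L)) * L\<^sup>2 = s b * (w_total + pi\<^sup>2 * w_deviation)"
    using \<open>0 < L\<close> by (simp add: field_simps power2_eq_square)
  then show ?thesis
    unfolding deviation unfolding inv_p w_avg L_def[symmetric] by simp
qed

lemma rayleigh_eq:
  fixes p0 q0 w0 u0 g0 :: "real \<Rightarrow> real"
  assumes [measurable]: "p0 \<in> borel_measurable lebesgue" "q0 \<in> borel_measurable lebesgue"
      "w0 \<in> borel_measurable lebesgue" "g0 \<in> borel_measurable lebesgue"
    and eq: "AE x in lborel. p0 x = p x \<and> q0 x = q x \<and> w0 x = w x \<and> g0 x = g x"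
    and u_eq: "\<And>x. x \<in> {a..b} \<Longrightarrow> u0 x = u x"
  shows "rayleigh a b p0 q0 w0 u0 g0
      = (energy + (LINT x:{a<..<b}|lborel. q x * (u x)\<^sup>2)) / (LINT x:{a<..<b}|lborel. w x * (u x)\<^sup>2)"
proof -
  note lborel_eq = lebesgue_set_integral_eq_lborel_AE(1)
  have [measurable]: "u \<in> borel_measurable lebesgue"
    by (rule measurable_completion) simp
  have energy: "(LINT x:{a<..<b}|lebesgue. p0 x * (g0 x)\<^sup>2) = energy"
    unfolding energy_def using eq by (intro lborel_eq) (auto elim: eventually_mono)
  have weighted: "(LINT x:{a<..<b}|lebesgue. f0 x * (u0 x)\<^sup>2) = (LINT x:{a<..<b}|lborel. f x * (u x)\<^sup>2)"
    if [measurable]: "f0 \<in> borel_measurable lebesgue" "f \<in> borel_measurable borel"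
      and f_eq: "AE x in lborel. f0 x = f x" for f0 f
  proof -
    have "(LINT x:{a<..<b}|lebesgue. f0 x * (u0 x)\<^sup>2) = (LINT x:{a<..<b}|lebesgue. f0 x * (u x)\<^sup>2)"
      by (rule set_lebesgue_integral_cong) (simp_all add: u_eq)
    also have "\<dots> = (LINT x:{a<..<b}|lborel. f x * (u x)\<^sup>2)"
      using f_eq by (intro lborel_eq) (auto elim: eventually_mono)
    finally show ?thesis .
  qed
  have q_eq: "AE x in lborel. q0 x = q x" and w_eq: "AE x in lborel. w0 x = w x"
    using eq by (auto elim: eventually_mono)
  show ?thesis
    unfolding rayleigh_def energy weighted[OF assms(2) q_measurable q_eq] weighted[OF assms(3) w_measurable w_eq] ..
qed

end

section \<open>Reduction to Borel coefficients\<close>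

lemma bounded_borel_representative:
  fixes f :: "real \<Rightarrow> real"
  assumes "f \<in> borel_measurable lebesgue" and bounds: "AE x in lebesgue. l \<le> f x \<and> f x \<le> r" and "l \<le> r"
  obtains f' where "f' \<in> borel_measurable borel" "\<And>x. l \<le> f' x" "\<And>x. f' x \<le> r"
    and "AE x in lborel. f x = f' x"
proof -
  obtain f0 where [measurable]: "f0 \<in> borel_measurable lborel" and f0: "AE x in lborel. f x = f0 x"
    using completion_ex_borel_measurable_real[OF assms(1)] by blast
  have "AE x in lborel. l \<le> f x \<and> f x \<le> r"
    using bounds by (simp add: AE_completion_iff)
  with f0 have "AE x in lborel. f x = max l (min r (f0 x))"
    by eventually_elim auto
  moreover have "(\<lambda>x. max l (min r (f0 x))) \<in> borel_measurable borel"
    by measurable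
  ultimately show ?thesis
    using \<open>l \<le> r\<close> by (intro that[of "\<lambda>x. max l (min r (f0 x))"]) auto
qed

lemma H10_borel_representative:
  assumes "H10 a b u g"
  obtains g' where "g' \<in> borel_measurable borel" "AE x in lborel. g x = g' x"
    and "set_integrable lborel {a<..<b} g'" "set_integrable lborel {a<..<b} (\<lambda>x. (g' x)\<^sup>2)"
    and "\<And>x. x \<in> {a..b} \<Longrightarrow> u x = (LINT t:{a<..<x}|lborel. g' t)"
proof -
  have g [measurable]: "g \<in> borel_measurable lebesgue"
    and g_int: "set_integrable lebesgue {a<..<b} g" "set_integrable lebesgue {a<..<b} (\<lambda>x. (g x)\<^sup>2)"
    and u: "\<And>x. x \<in> {a..b} \<Longrightarrow> u x = (LINT t:{a<..<x}|lebesgue. g t)"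
    using assms unfolding H10_def by auto
  obtain g' where [measurable]: "g' \<in> borel_measurable lborel" and eq: "AE x in lborel. g x = g' x"
    using completion_ex_borel_measurable_real[OF g] by blast
  have eq_sq: "AE x in lborel. (g x)\<^sup>2 = (g' x)\<^sup>2"
    using eq by eventually_elim simp
  show ?thesis
  proof (rule that)
    show "set_integrable lborel {a<..<b} g'"
      using g_int(1) lebesgue_set_integral_eq_lborel_AE(2)[OF g _ _ eq] by simp
    show "set_integrable lborel {a<..<b} (\<lambda>x. (g' x)\<^sup>2)"
      using g_int(2) lebesgue_set_integral_eq_lborel_AE(2)[OF _ _ _ eq_sq] by simp
    show "u x = (LINT t:{a<..<x}|lborel. g' t)" if "x \<in> {a..b}" for x
      using u[OF that] lebesgue_set_integral_eq_lborel_AE(1)[OF g _ _ eq] by simp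
  qed (use eq in simp_all)
qed

lemma rayleigh_ge_average_bound:
  fixes \<beta> a b :: real and p q w u g :: "real \<Rightarrow> real"
  assumes \<beta>: "1 < \<beta>"
    and p: "p \<in> borel_measurable lebesgue" and q: "q \<in> borel_measurable lebesgue"
    and w: "w \<in> borel_measurable lebesgue"
    and q_bounds: "AE x in lebesgue. 0 \<le> q x \<and> q x \<le> \<beta>"
    and p_bounds: "AE x in lebesgue. 1 / \<beta> \<le> p x \<and> p x \<le> \<beta>"
    and w_bounds: "AE x in lebesgue. 1 / \<beta> \<le> w x \<and> w x \<le> \<beta>"
    and "a < b" and H: "H10 a b u g" and nonzero: "\<exists>x\<in>{a<..<b}. u x \<noteq> 0"
  shows "pi\<^sup>2 / (avg a b (\<lambda>x. 1 / p x) *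
             (avg a b w + pi\<^sup>2 * avg a b (\<lambda>x. \<bar>w x - avg a b w / avg a b (\<lambda>x. 1 / p x) * (1 / p x)\<bar>))
             * (b - a)\<^sup>2) \<le> rayleigh a b p q w u g"
proof -
  have "1 / \<beta> \<le> \<beta>" "0 \<le> \<beta>" using \<beta> less_1_mult[OF \<beta> \<beta>] by (simp_all add: field_simps)
  obtain p' where [measurable]: "p' \<in> borel_measurable borel" and p': "\<And>x. 1 / \<beta> \<le> p' x" "\<And>x. p' x \<le> \<beta>"
    and p_eq: "AE x in lborel. p x = p' x"
    using bounded_borel_representative[OF p p_bounds \<open>1 / \<beta> \<le> \<beta>\<close>] by metis
  obtain w' where [measurable]: "w' \<in> borel_measurable borel" and w': "\<And>x. 1 / \<beta> \<le> w' x" "\<And>x. w' x \<le> \<beta>"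
    and w_eq: "AE x in lborel. w x = w' x"
    using bounded_borel_representative[OF w w_bounds \<open>1 / \<beta> \<le> \<beta>\<close>] by metis
  obtain q' where [measurable]: "q' \<in> borel_measurable borel" and q': "\<And>x. 0 \<le> q' x"
    and q_eq: "AE x in lborel. q x = q' x"
    using bounded_borel_representative[OF q q_bounds \<open>0 \<le> \<beta>\<close>] by metis
  obtain g' where [measurable]: "g' \<in> borel_measurable borel" and g_eq: "AE x in lborel. g x = g' x"
    and g': "set_integrable lborel {a<..<b} g'" "set_integrable lborel {a<..<b} (\<lambda>x. (g' x)\<^sup>2)"
    and u_eq: "\<And>x. x \<in> {a..b} \<Longrightarrow> u x = (LINT t:{a<..<x}|lborel. g' t)"
    using H10_borel_representative[OF H] by blast
  have "(LINT t:{a<..<b}|lborel. g' t) = 0"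
    using H u_eq[of b] \<open>a < b\<close> by (simp add: H10_def)
  then interpret D: dirichlet_data p' \<beta> a b g'
    by unfold_locales (use p' \<beta> \<open>a < b\<close> g' in auto)
  have u: "u x = D.u x" if "x \<in> {a..b}" for x
    using u_eq[OF that] by (simp add: D.u_def)
  interpret R: rayleigh_data p' \<beta> a b g' w' q'
    by unfold_locales (use w' q' nonzero u in auto)
  have g: "g \<in> borel_measurable lebesgue" and eq: "AE x in lborel. p x = p' x \<and> q x = q' x \<and> w x = w' x \<and> g x = g' x"
    using H p_eq q_eq w_eq g_eq by (auto simp: H10_def)
  have rayleigh: "rayleigh a b p q w u g
      = (D.energy + (LINT x:{a<..<b}|lborel. q' x * (D.u x)\<^sup>2)) / (LINT x:{a<..<b}|lborel. w' x * (D.u x)\<^sup>2)"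
    by (rule R.rayleigh_eq[OF p q w g eq u])
  show ?thesis
    unfolding R.average_bound_eq[OF p w p_eq w_eq] rayleigh by (rule R.rayleigh_quotient_ge)
qed

lemma lebesgue_set_integral_Ioo_minus_const:
  fixes a x m :: real
  assumes "a \<le> x"
  shows "(LINT t:{a<..<x}|lebesgue. t - m) = ((x - m)\<^sup>2 - (a - m)\<^sup>2) / 2"
proof -
  have "(LINT t:{a<..<x}|lebesgue. t - m) = (LINT t:{a<..<x}|lborel. t - m)"
    by (rule lebesgue_set_integral_eq_lborel_AE(1)) (auto intro: measurable_completion)
  also have "\<dots> = (LBINT t=ereal a..ereal x. t - m)"
    using assms by (simp add: interval_integral_Ioo)
  also have "\<dots> = (x - m)\<^sup>2 / 2 - (a - m)\<^sup>2 / 2"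
  proof (rule interval_integral_FTC_finite)
    show "continuous_on {min a x..max a x} (\<lambda>t. t - m)"
      by (intro continuous_intros)
    fix t
    have "((\<lambda>t. (t - m)\<^sup>2 / 2) has_real_derivative (t - m)) (at t)"
      by (auto intro!: derivative_eq_intros simp: power2_eq_square)
    then show "((\<lambda>t. (t - m)\<^sup>2 / 2) has_vector_derivative t - m) (at t within {min a x..max a x})"
      by (simp add: has_real_derivative_iff_has_vector_derivative has_vector_derivative_at_within)
  qed
  finally show ?thesis by (simp add: field_simps)
qed

lemma H10_nonzero_exists:
  fixes a b :: real
  assumes "a < b"
  shows "\<exists>u g. H10 a b u g \<and> (\<exists>x\<in>{a<..<b}. u x \<noteq> 0)"
proof -
  define m where "m = (a + b) / 2"
  define g where "g t = t - m" for t
  define u where "u x = (LINT t:{a<..<x}|lebesgue. g t)" for x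
  have u_eq: "u x = ((x - m)\<^sup>2 - (a - m)\<^sup>2) / 2" if "a \<le> x" for x
    unfolding u_def g_def by (rule lebesgue_set_integral_Ioo_minus_const[OF that])
  have integrable: "set_integrable lebesgue {a<..<b} f" if "continuous_on UNIV f" for f :: "real \<Rightarrow> real"
  proof -
    have [measurable]: "f \<in> borel_measurable borel"
      using that by (rule borel_measurable_continuous_onI)
    have "set_integrable lborel {a..b} f"
      by (rule borel_integrable_atLeastAtMost') (use that continuous_on_subset in blast)
    then have "set_integrable lborel {a<..<b} f"
      by (rule set_integrable_subset) auto
    then show ?thesis
      by (subst lebesgue_set_integral_eq_lborel_AE(2)) (auto intro: measurable_completion)
  qed
  have "H10 a b u g"
    unfolding H10_def
  proof (intro conjI ballI)
    show "g \<in> borel_measurable lebesgue"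
      unfolding g_def by (intro measurable_completion) simp
    show "set_integrable lebesgue {a<..<b} g" "set_integrable lebesgue {a<..<b} (\<lambda>x. (g x)\<^sup>2)"
      unfolding g_def by (intro integrable continuous_intros)+
    show "u b = 0"
      using u_eq[of b] assms unfolding m_def by (simp add: field_simps power2_eq_square)
  qed (simp add: u_def)
  moreover have "m \<in> {a<..<b}" "u m \<noteq> 0"
    using assms u_eq[of m] unfolding m_def by auto
  ultimately show ?thesis by blast
qed

theorem mainTheorem5:
  fixes \<beta> a b :: real and p q w :: "real \<Rightarrow> real"
  assumes "1 < \<beta>"
    and "p \<in> borel_measurable lebesgue" "q \<in> borel_measurable lebesgue" "w \<in> borel_measurable lebesgue"
    and "AE x in lebesgue. 0 \<le> q x \<and> q x \<le> \<beta>"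
    and "AE x in lebesgue. 1 / \<beta> \<le> p x \<and> p x \<le> \<beta>"
    and "AE x in lebesgue. 1 / \<beta> \<le> w x \<and> w x \<le> \<beta>"
    and "a < b"
  shows "lambdaJ a b p q w \<ge>
    pi\<^sup>2 / (avg a b (\<lambda>x. 1 / p x) *
             (avg a b w + pi\<^sup>2 * avg a b (\<lambda>x. \<bar>w x - avg a b w / avg a b (\<lambda>x. 1 / p x) * (1 / p x)\<bar>))
             * (b - a)\<^sup>2)"
  unfolding lambdaJ_def
proof (rule cInf_greatest)
  show "{rayleigh a b p q w u g | u g. H10 a b u g \<and> (\<exists>x\<in>{a<..<b}. u x \<noteq> 0)} \<noteq> {}"
    using H10_nonzero_exists[OF \<open>a < b\<close>] by blast
qed (use rayleigh_ge_average_bound[OF assms] in blast)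

end
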